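(* Let $\beta>0$, let $E_0,\dots,E_{d-1}$ be energy levels, and let $\mathbf{p}$ be a probability vector on these levels with $\beta$-order $\pi$. For any ordering $\alpha$ of the levels, let $\mathbf{p}^\alpha=P^{(\pi,\alpha)}\mathbf{p}$. Then $\mathbf{p}^\alpha$ has $\beta$-order $\alpha$, and it is maximal in the sense that there is no probability vector $\mathbf{q}\neq\mathbf{p}^\alpha$ with $\beta$-order $\alpha$ such that $\mathbf{p}\succeq_{\rm th}\mathbf{q}\succeq_{\rm th}\mathbf{p}^\alpha$.
   Context: $\beta$-order: a permutation $\pi$ of $\{0,\dots,d-1\}$ such that $p_{\pi(0)}e^{\beta E_{\pi(0)}}\ge p_{\pi(1)}e^{\beta E_{\pi(1)}}\ge\dots$. Thermo-majorization: the thermo-majorization curve of $\mathbf{p}$ with $\beta$-order $\pi$ is the piecewise linear curve joining $(0,0)$ and the points $\big(\sum_{i=0}^k e^{-\beta E_{\pi(i)}},\sum_{i=0}^k p_{\pi(i)}\big)$, $k=0,\dots,d-1$; $\mathbf{p}\succeq_{\rm th}\mathbf{p}'$ means the curve of $\mathbf{p}$ is never below that of $\mathbf{p}'$. $\beta$-permutation matrix: set $g_m=e^{-\beta E_m}$, $X_m=\sum_{i<m}g_{\alpha(i)}$, $Y_j=\sum_{l<j}g_{\pi(l)}$, and define the $d\times d$ matrix $P^{(\pi,\alpha)}$ by $P^{(\pi,\alpha)}_{\alpha(m)|\pi(j)}=\max\{0,\min(X_{m+1},Y_{j+1})-\max(X_m,Y_j)\}/g_{\pi(j)}$ (entry in row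 $\alpha(m)$, column $\pi(j)$), acting on column probability vectors. *)

theory Defs
  imports Complex_Main
begin

text \<open>Levels are indexed by 0..d-1; vectors and energies are functions nat => real,
  only the values at indices < d matter. Orderings are bijections of {..<d}.\<close>

definition gibbs_w :: "(nat \<Rightarrow> real) \<Rightarrow> real \<Rightarrow> nat \<Rightarrow> real" where
  "gibbs_w E \<beta> m = exp (- \<beta> * E m)"

definition is_perm :: "nat \<Rightarrow> (nat \<Rightarrow> nat) \<Rightarrow> bool" where
  "is_perm d \<sigma> \<longleftrightarrow> bij_betw \<sigma> {..<d} {..<d}"

definition prob_vec :: "nat \<Rightarrow> (nat \<Rightarrow> real) \<Rightarrow> bool" where
  "prob_vec d p \<longleftrightarrow> (\<forall>i<d. 0 \<le> p i) \<and> (\<Sum>i<d. p i) = 1"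

definition is_beta_order :: "nat \<Rightarrow> (nat \<Rightarrow> real) \<Rightarrow> real \<Rightarrow> (nat \<Rightarrow> real) \<Rightarrow> (nat \<Rightarrow> nat) \<Rightarrow> bool" where
  "is_beta_order d E \<beta> p \<pi> \<longleftrightarrow> is_perm d \<pi> \<and>
     (\<forall>i. Suc i < d \<longrightarrow> p (\<pi> i) * exp (\<beta> * E (\<pi> i)) \<ge> p (\<pi> (Suc i)) * exp (\<beta> * E (\<pi> (Suc i))))"

definition cumw :: "(nat \<Rightarrow> real) \<Rightarrow> real \<Rightarrow> (nat \<Rightarrow> nat) \<Rightarrow> nat \<Rightarrow> real" where
  "cumw E \<beta> \<sigma> k = (\<Sum>i<k. gibbs_w E \<beta> (\<sigma> i))"

text \<open>Thermo-majorization curve of p w.r.t. the beta-order sigma: the piecewise linear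
  curve through (0,0) and (cumw (k+1), sum_{i<=k} p(sigma i)). On the k-th segment
  [cumw k, cumw (k+1)] it has slope p(sigma k)/g(sigma k); written in closed form as a
  sum of clamped linear pieces (g > 0).\<close>
definition th_curve :: "nat \<Rightarrow> (nat \<Rightarrow> real) \<Rightarrow> real \<Rightarrow> (nat \<Rightarrow> real) \<Rightarrow> (nat \<Rightarrow> nat) \<Rightarrow> real \<Rightarrow> real" where
  "th_curve d E \<beta> p \<sigma> x =
     (\<Sum>k<d. p (\<sigma> k) *
        max 0 (min 1 ((x - cumw E \<beta> \<sigma> k) / gibbs_w E \<beta> (\<sigma> k))))"

text \<open>p thermo-majorizes p': the curve of p is never below that of p' on [0, Z]
  (curves taken w.r.t. any beta-orders of p and p'; they do not depend on the choice).\<close>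
definition th_majorizes :: "nat \<Rightarrow> (nat \<Rightarrow> real) \<Rightarrow> real \<Rightarrow> (nat \<Rightarrow> real) \<Rightarrow> (nat \<Rightarrow> real) \<Rightarrow> bool" where
  "th_majorizes d E \<beta> p p' \<longleftrightarrow>
     (\<forall>\<sigma> \<tau>. is_beta_order d E \<beta> p \<sigma> \<longrightarrow> is_beta_order d E \<beta> p' \<tau> \<longrightarrow>
        (\<forall>x. 0 \<le> x \<and> x \<le> (\<Sum>i<d. gibbs_w E \<beta> i) \<longrightarrow> th_curve d E \<beta> p' \<tau> x \<le> th_curve d E \<beta> p \<sigma> x))"

definition beta_perm_matrix :: "nat \<Rightarrow> (nat \<Rightarrow> real) \<Rightarrow> real \<Rightarrow> (nat \<Rightarrow> nat) \<Rightarrow> (nat \<Rightarrow> nat) \<Rightarrow> nat \<Rightarrow> nat \<Rightarrow> real" where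
  "beta_perm_matrix d E \<beta> \<pi> \<alpha> r c =
     (let m = inv_into {..<d} \<alpha> r; j = inv_into {..<d} \<pi> c;
          X = cumw E \<beta> \<alpha>; Y = cumw E \<beta> \<pi>
      in max 0 (min (X (Suc m)) (Y (Suc j)) - max (X m) (Y j)) / gibbs_w E \<beta> (\<pi> j))"

definition mat_apply :: "nat \<Rightarrow> (nat \<Rightarrow> nat \<Rightarrow> real) \<Rightarrow> (nat \<Rightarrow> real) \<Rightarrow> nat \<Rightarrow> real" where
  "mat_apply d M p r = (\<Sum>c<d. M r c * p c)"

end

theory Submission
  imports Defs
begin

text \<open>On the \<open>j\<close>-th interval \<open>[Y j, Y (j+1)]\<close> the thermo-majorization curve of \<open>p\<close>
  (along its \<open>\<beta>\<close>-order \<open>\<pi>\<close>) has slope \<open>s j = p (\<pi> j) e^(\<beta> E (\<pi> j))\<close>, and these slopes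
  decrease. The matrix entry in row \<open>\<alpha> m\<close>, column \<open>\<pi> j\<close> times \<open>p (\<pi> j)\<close> is \<open>s j\<close> times the length of
  \<open>[X m, X (m+1)] \<inter> [Y j, Y (j+1)]\<close>, so \<open>p\<^sup>\<alpha> (\<alpha> m)\<close> is the increase of the curve of \<open>p\<close>
  over \<open>[X m, X (m+1)]\<close>: the curve of \<open>p\<^sup>\<alpha>\<close> along \<open>\<alpha>\<close> interpolates that of \<open>p\<close> at the
  points \<open>X m\<close>. Its slopes are averages of the decreasing \<open>s j\<close> over consecutive
  intervals, hence decrease, which says that \<open>\<alpha>\<close> is a \<open>\<beta>\<close>-order of \<open>p\<^sup>\<alpha>\<close>.
  Finally, the curve of any \<open>q\<close> with \<open>\<beta>\<close>-order \<open>\<alpha>\<close> passes through the points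
  \<open>(X m, \<Sum>k<m. q (\<alpha> k))\<close>; squeezed between two curves that agree at the \<open>X m\<close>, it has
  the same partial sums along \<open>\<alpha>\<close> as \<open>p\<^sup>\<alpha>\<close>, so \<open>q = p\<^sup>\<alpha>\<close>.\<close>

definition overlap :: "real \<Rightarrow> real \<Rightarrow> real \<Rightarrow> real \<Rightarrow> real" where
  "overlap a b c e = max 0 (min b e - max a c)"

lemma overlap_nonneg: "0 \<le> overlap a b c e"
  by (simp add: overlap_def)

lemma overlap_commute: "overlap a b c e = overlap c e a b"
  by (simp add: overlap_def min.commute max.commute)

lemma overlap_pos_imp: "0 < overlap a b c e \<Longrightarrow> c < b \<and> a < e"
  by (auto simp: overlap_def)

lemma overlap_append:
  "a \<le> b \<Longrightarrow> b \<le> f \<Longrightarrow> c \<le> e \<Longrightarrow> overlap a b c e + overlap b f c e = overlap a f c e"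
  by (simp add: overlap_def max_def min_def)

lemma sum_overlap_telescope:
  assumes "incseq F" and "c \<le> e"
  shows "(\<Sum>k<m. overlap (F k) (F (Suc k)) c e) = overlap (F 0) (F m) c e"
proof (induction m)
  case 0
  show ?case by (simp add: overlap_def)
next
  case (Suc m)
  have "F 0 \<le> F m" "F m \<le> F (Suc m)"
    using \<open>incseq F\<close> by (simp_all add: incseq_def)
  with Suc show ?case
    using overlap_append[OF _ _ \<open>c \<le> e\<close>] by simp
qed

lemma clamped_ramp_eq_overlap:
  fixes g x y :: real
  assumes "0 < g" and "0 \<le> y"
  shows "g * max 0 (min 1 ((x - y) / g)) = overlap 0 x y (y + g)"
  using assms by (auto simp: overlap_def max_def min_def field_simps)

lemma gibbs_w_pos: "0 < gibbs_w E \<beta> m"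
  by (simp add: gibbs_w_def)

lemma mult_exp_eq_divide_gibbs_w: "x * exp (\<beta> * E m) = x / gibbs_w E \<beta> m"
  by (simp add: gibbs_w_def exp_minus divide_inverse)

lemma cumw_0 [simp]: "cumw E \<beta> \<sigma> 0 = 0"
  by (simp add: cumw_def)

lemma cumw_Suc: "cumw E \<beta> \<sigma> (Suc k) = cumw E \<beta> \<sigma> k + gibbs_w E \<beta> (\<sigma> k)"
  by (simp add: cumw_def)

lemma incseq_cumw: "incseq (cumw E \<beta> \<sigma>)"
  by (rule incseq_SucI) (simp add: cumw_Suc gibbs_w_pos less_imp_le)

lemma cumw_mono: "k \<le> m \<Longrightarrow> cumw E \<beta> \<sigma> k \<le> cumw E \<beta> \<sigma> m"
  using incseq_cumw by (simp add: incseq_def)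

lemma cumw_nonneg: "0 \<le> cumw E \<beta> \<sigma> k"
  using cumw_mono[of 0 k] by simp

lemma cumw_perm: "is_perm d \<sigma> \<Longrightarrow> cumw E \<beta> \<sigma> d = (\<Sum>i<d. gibbs_w E \<beta> i)"
  unfolding cumw_def is_perm_def by (rule sum.reindex_bij_betw)

lemma th_curve_eq_sum_overlap:
  assumes "0 \<le> x"
  shows "th_curve d E \<beta> p \<sigma> x =
    (\<Sum>k<d. p (\<sigma> k) * exp (\<beta> * E (\<sigma> k)) *
       overlap 0 x (cumw E \<beta> \<sigma> k) (cumw E \<beta> \<sigma> (Suc k)))"
  unfolding th_curve_def
proof (rule sum.cong)
  fix k
  let ?g = "gibbs_w E \<beta> (\<sigma> k)" and ?Y = "cumw E \<beta> \<sigma> k"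
  have "?g * max 0 (min 1 ((x - ?Y) / ?g)) = overlap 0 x ?Y (cumw E \<beta> \<sigma> (Suc k))"
    using clamped_ramp_eq_overlap[OF gibbs_w_pos cumw_nonneg] by (simp add: cumw_Suc)
  then show "p (\<sigma> k) * max 0 (min 1 ((x - ?Y) / ?g)) =
      p (\<sigma> k) * exp (\<beta> * E (\<sigma> k)) * overlap 0 x ?Y (cumw E \<beta> \<sigma> (Suc k))"
    using gibbs_w_pos[of E \<beta> "\<sigma> k"]
    unfolding mult_exp_eq_divide_gibbs_w by (simp add: field_simps)
qed simp

lemma th_curve_cumw:
  assumes "m \<le> d"
  shows "th_curve d E \<beta> q \<sigma> (cumw E \<beta> \<sigma> m) = (\<Sum>k<m. q (\<sigma> k))"
proof -
  have "th_curve d E \<beta> q \<sigma> (cumw E \<beta> \<sigma> m) = (\<Sum>k<d. if k < m then q (\<sigma> k) else 0)"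
    unfolding th_curve_def
  proof (rule sum.cong)
    fix k
    let ?g = "gibbs_w E \<beta> (\<sigma> k)" and ?t = "cumw E \<beta> \<sigma> m - cumw E \<beta> \<sigma> k"
    have "?g \<le> ?t" if "k < m"
      using cumw_mono[of "Suc k" m E \<beta> \<sigma>] that by (simp add: cumw_Suc)
    moreover have "?t \<le> 0" if "\<not> k < m"
      using cumw_mono[of m k E \<beta> \<sigma>] that by simp
    ultimately show "q (\<sigma> k) * max 0 (min 1 (?t / ?g)) = (if k < m then q (\<sigma> k) else 0)"
      using gibbs_w_pos[of E \<beta> "\<sigma> k"] by (auto simp: divide_le_0_iff)
  qed simp
  also have "\<dots> = (\<Sum>k<m. q (\<sigma> k))"
    using assms by (simp add: sum.If_cases flip: lessThan_def) (simp add: Int_absorb1)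
  finally show ?thesis .
qed

lemma sum_mult_sum_le_if_separated:
  fixes a b s :: "'i \<Rightarrow> real"
  assumes "\<And>j. j \<in> A \<Longrightarrow> 0 \<le> a j" and "\<And>j. j \<in> A \<Longrightarrow> 0 \<le> b j"
    and "\<And>j j'. j \<in> A \<Longrightarrow> j' \<in> A \<Longrightarrow> 0 < a j \<Longrightarrow> 0 < b j' \<Longrightarrow> s j' \<le> s j"
  shows "(\<Sum>j\<in>A. a j) * (\<Sum>j\<in>A. b j * s j) \<le> (\<Sum>j\<in>A. a j * s j) * (\<Sum>j\<in>A. b j)"
proof -
  have "0 \<le> a j * b j' * (s j - s j')" if "j \<in> A" "j' \<in> A" for j j'
  proof (cases "0 < a j \<and> 0 < b j'")
    case True
    then show ?thesis using assms(3)[OF that] by simp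
  next
    case False
    then have "a j = 0 \<or> b j' = 0"
      using assms(1)[OF \<open>j \<in> A\<close>] assms(2)[OF \<open>j' \<in> A\<close>] by linarith
    then show ?thesis by auto
  qed
  then have "0 \<le> (\<Sum>j\<in>A. \<Sum>j'\<in>A. a j * b j' * (s j - s j'))"
    by (intro sum_nonneg) auto
  also have "\<dots> = (\<Sum>j\<in>A. \<Sum>j'\<in>A. a j * s j * b j') - (\<Sum>j\<in>A. \<Sum>j'\<in>A. a j * (b j' * s j'))"
    by (simp add: right_diff_distrib sum_subtractf algebra_simps)
  also have "\<dots> = (\<Sum>j\<in>A. a j * s j) * (\<Sum>j\<in>A. b j) - (\<Sum>j\<in>A. a j) * (\<Sum>j\<in>A. b j * s j)"
    by (simp only: sum_product)
  finally show ?thesis by simp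
qed

lemma is_beta_order_antimono:
  assumes "is_beta_order d E \<beta> p \<pi>" and "j \<le> j'" and "j' < d"
  shows "p (\<pi> j') * exp (\<beta> * E (\<pi> j')) \<le> p (\<pi> j) * exp (\<beta> * E (\<pi> j))"
  using assms(2,3)
proof (induction j' rule: dec_induct)
  case (step n)
  with assms(1) show ?case
    unfolding is_beta_order_def by (meson Suc_lessD order_trans)
qed simp

context
  fixes d :: nat and E :: "nat \<Rightarrow> real" and \<beta> :: real and \<pi> \<alpha> :: "nat \<Rightarrow> nat"
  assumes perm_\<pi>: "is_perm d \<pi>" and perm_\<alpha>: "is_perm d \<alpha>"
begin

lemma beta_perm_matrix_entry:
  assumes "m < d" and "j < d"
  shows "beta_perm_matrix d E \<beta> \<pi> \<alpha> (\<alpha> m) (\<pi> j) =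
    overlap (cumw E \<beta> \<alpha> m) (cumw E \<beta> \<alpha> (Suc m)) (cumw E \<beta> \<pi> j) (cumw E \<beta> \<pi> (Suc j))
      / gibbs_w E \<beta> (\<pi> j)"
proof -
  have "inv_into {..<d} \<alpha> (\<alpha> m) = m" "inv_into {..<d} \<pi> (\<pi> j) = j"
    using perm_\<alpha> perm_\<pi> assms by (auto simp: is_perm_def bij_betw_def)
  then show ?thesis
    unfolding beta_perm_matrix_def Let_def overlap_def by simp
qed

lemma mat_apply_beta_perm_matrix:
  assumes "m < d"
  shows "mat_apply d (beta_perm_matrix d E \<beta> \<pi> \<alpha>) p (\<alpha> m) =
    (\<Sum>j<d. p (\<pi> j) * exp (\<beta> * E (\<pi> j)) *
       overlap (cumw E \<beta> \<alpha> m) (cumw E \<beta> \<alpha> (Suc m)) (cumw E \<beta> \<pi> j) (cumw E \<beta> \<pi> (Suc j)))"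
proof -
  have "mat_apply d (beta_perm_matrix d E \<beta> \<pi> \<alpha>) p (\<alpha> m) =
      (\<Sum>j<d. beta_perm_matrix d E \<beta> \<pi> \<alpha> (\<alpha> m) (\<pi> j) * p (\<pi> j))"
    unfolding mat_apply_def
    using sum.reindex_bij_betw[OF perm_\<pi>[unfolded is_perm_def],
        of "\<lambda>c. beta_perm_matrix d E \<beta> \<pi> \<alpha> (\<alpha> m) c * p c"] by simp
  also have "\<dots> = (\<Sum>j<d. p (\<pi> j) * exp (\<beta> * E (\<pi> j)) *
       overlap (cumw E \<beta> \<alpha> m) (cumw E \<beta> \<alpha> (Suc m)) (cumw E \<beta> \<pi> j) (cumw E \<beta> \<pi> (Suc j)))"
    using assms by (intro sum.cong) (simp_all add: beta_perm_matrix_entry mult_exp_eq_divide_gibbs_w)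
  finally show ?thesis .
qed


lemma th_curve_beta_perm_matrix_cumw:
  assumes "m \<le> d"
  shows "th_curve d E \<beta> (mat_apply d (beta_perm_matrix d E \<beta> \<pi> \<alpha>) p) \<alpha> (cumw E \<beta> \<alpha> m) =
    th_curve d E \<beta> p \<pi> (cumw E \<beta> \<alpha> m)"
proof -
  let ?X = "cumw E \<beta> \<alpha>" and ?Y = "cumw E \<beta> \<pi>"
  let ?s = "\<lambda>j. p (\<pi> j) * exp (\<beta> * E (\<pi> j))"
  have "th_curve d E \<beta> (mat_apply d (beta_perm_matrix d E \<beta> \<pi> \<alpha>) p) \<alpha> (?X m) =
      (\<Sum>k<m. \<Sum>j<d. ?s j * overlap (?X k) (?X (Suc k)) (?Y j) (?Y (Suc j)))"
    using assms by (simp add: th_curve_cumw mat_apply_beta_perm_matrix)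
  also have "\<dots> = (\<Sum>j<d. ?s j * (\<Sum>k<m. overlap (?X k) (?X (Suc k)) (?Y j) (?Y (Suc j))))"
    by (simp add: sum.swap[of _ "{..<m}"] sum_distrib_left)
  also have "\<dots> = (\<Sum>j<d. ?s j * overlap 0 (?X m) (?Y j) (?Y (Suc j)))"
    by (simp add: sum_overlap_telescope incseq_cumw cumw_mono)
  also have "\<dots> = th_curve d E \<beta> p \<pi> (?X m)"
    by (simp add: th_curve_eq_sum_overlap cumw_nonneg)
  finally show ?thesis .
qed

lemma sum_overlap_cumw:
  assumes "m < d"
  shows "(\<Sum>j<d. overlap (cumw E \<beta> \<alpha> m) (cumw E \<beta> \<alpha> (Suc m)) (cumw E \<beta> \<pi> j) (cumw E \<beta> \<pi> (Suc j)))
    = gibbs_w E \<beta> (\<alpha> m)"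
proof -
  let ?X = "cumw E \<beta> \<alpha>" and ?Y = "cumw E \<beta> \<pi>"
  have "(\<Sum>j<d. overlap (?X m) (?X (Suc m)) (?Y j) (?Y (Suc j))) = overlap (?Y 0) (?Y d) (?X m) (?X (Suc m))"
    using sum_overlap_telescope[OF incseq_cumw[of E \<beta> \<pi>], of "?X m" "?X (Suc m)" d]
    by (simp add: overlap_commute[of "?X m"] cumw_mono)
  also have "?Y d = ?X d"
    using cumw_perm[OF perm_\<pi>] cumw_perm[OF perm_\<alpha>] by simp
  also have "overlap (?Y 0) (?X d) (?X m) (?X (Suc m)) = ?X (Suc m) - ?X m"
    using assms cumw_mono[of "Suc m" d E \<beta> \<alpha>] cumw_mono[of m "Suc m" E \<beta> \<alpha>] cumw_nonneg[of E \<beta> \<alpha> m]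
    by (simp add: overlap_def)
  finally show ?thesis by (simp add: cumw_Suc)
qed

lemma is_beta_order_beta_perm_matrix:
  assumes "is_beta_order d E \<beta> p \<pi>"
  shows "is_beta_order d E \<beta> (mat_apply d (beta_perm_matrix d E \<beta> \<pi> \<alpha>) p) \<alpha>"
  unfolding is_beta_order_def
proof (intro conjI allI impI)
  fix i assume "Suc i < d"
  let ?X = "cumw E \<beta> \<alpha>" and ?Y = "cumw E \<beta> \<pi>"
  let ?s = "\<lambda>j. p (\<pi> j) * exp (\<beta> * E (\<pi> j))"
  define a where "a j = overlap (?X i) (?X (Suc i)) (?Y j) (?Y (Suc j))" for j
  define b where "b j = overlap (?X (Suc i)) (?X (Suc (Suc i))) (?Y j) (?Y (Suc j))" for j
  have "?s j' \<le> ?s j" if "j' < d" and a_pos: "0 < a j" and b_pos: "0 < b j'" for j j'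
  proof -
    have "?Y j < ?X (Suc i)" "?X (Suc i) < ?Y (Suc j')"
      using overlap_pos_imp[OF a_pos[unfolded a_def]] overlap_pos_imp[OF b_pos[unfolded b_def]]
      by simp_all
    then have "j \<le> j'"
      using cumw_mono[of "Suc j'" j E \<beta> \<pi>] by fastforce
    then show ?thesis
      using is_beta_order_antimono[OF assms _ \<open>j' < d\<close>] by blast
  qed
  then have "(\<Sum>j<d. a j) * (\<Sum>j<d. b j * ?s j) \<le> (\<Sum>j<d. a j * ?s j) * (\<Sum>j<d. b j)"
    by (intro sum_mult_sum_le_if_separated) (auto simp: a_def b_def overlap_nonneg)
  moreover have "(\<Sum>j<d. a j) = gibbs_w E \<beta> (\<alpha> i)" "(\<Sum>j<d. b j) = gibbs_w E \<beta> (\<alpha> (Suc i))"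
    unfolding a_def b_def using \<open>Suc i < d\<close> by (simp_all add: sum_overlap_cumw)
  moreover have "mat_apply d (beta_perm_matrix d E \<beta> \<pi> \<alpha>) p (\<alpha> i) = (\<Sum>j<d. a j * ?s j)"
    "mat_apply d (beta_perm_matrix d E \<beta> \<pi> \<alpha>) p (\<alpha> (Suc i)) = (\<Sum>j<d. b j * ?s j)"
    unfolding a_def b_def using \<open>Suc i < d\<close> by (simp_all add: mat_apply_beta_perm_matrix mult.commute)
  ultimately have "gibbs_w E \<beta> (\<alpha> i) * mat_apply d (beta_perm_matrix d E \<beta> \<pi> \<alpha>) p (\<alpha> (Suc i))
      \<le> mat_apply d (beta_perm_matrix d E \<beta> \<pi> \<alpha>) p (\<alpha> i) * gibbs_w E \<beta> (\<alpha> (Suc i))"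
    by (simp only:)
  then show "mat_apply d (beta_perm_matrix d E \<beta> \<pi> \<alpha>) p (\<alpha> (Suc i)) * exp (\<beta> * E (\<alpha> (Suc i)))
      \<le> mat_apply d (beta_perm_matrix d E \<beta> \<pi> \<alpha>) p (\<alpha> i) * exp (\<beta> * E (\<alpha> i))"
    using gibbs_w_pos[of E \<beta> "\<alpha> i"] gibbs_w_pos[of E \<beta> "\<alpha> (Suc i)"]
    unfolding mult_exp_eq_divide_gibbs_w by (simp add: field_simps)
qed (rule perm_\<alpha>)

end

lemma eq_if_partial_sums_eq:
  fixes q r :: "nat \<Rightarrow> 'a::cancel_comm_monoid_add"
  assumes "is_perm d \<alpha>" and "\<And>m. m \<le> d \<Longrightarrow> (\<Sum>k<m. q (\<alpha> k)) = (\<Sum>k<m. r (\<alpha> k))"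
    and "i < d"
  shows "q i = r i"
proof -
  obtain k where "k < d" "i = \<alpha> k"
    using assms(1,3) unfolding is_perm_def bij_betw_def by auto
  then show ?thesis
    using assms(2)[of k] assms(2)[of "Suc k"] by simp
qed

theorem lemma2:
  fixes d :: nat and E :: "nat \<Rightarrow> real" and \<beta> :: real
    and p :: "nat \<Rightarrow> real" and \<pi> \<alpha> :: "nat \<Rightarrow> nat"
  assumes "\<beta> > 0"
    and "prob_vec d p"
    and "is_beta_order d E \<beta> p \<pi>"
    and "is_perm d \<alpha>"
  shows "is_beta_order d E \<beta> (mat_apply d (beta_perm_matrix d E \<beta> \<pi> \<alpha>) p) \<alpha>
       \<and> \<not> (\<exists>q. prob_vec d q \<and> is_beta_order d E \<beta> q \<alpha>
               \<and> (\<exists>i<d. q i \<noteq> mat_apply d (beta_perm_matrix d E \<beta> \<pi> \<alpha>) p i)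
               \<and> th_majorizes d E \<beta> p q
               \<and> th_majorizes d E \<beta> q (mat_apply d (beta_perm_matrix d E \<beta> \<pi> \<alpha>) p))"
proof -
  let ?p\<alpha> = "mat_apply d (beta_perm_matrix d E \<beta> \<pi> \<alpha>) p"
  have perm_\<pi>: "is_perm d \<pi>"
    using assms(3) by (simp add: is_beta_order_def)
  have order_p\<alpha>: "is_beta_order d E \<beta> ?p\<alpha> \<alpha>"
    using perm_\<pi> assms(4,3) by (rule is_beta_order_beta_perm_matrix)
  moreover have "q i = ?p\<alpha> i"
    if order_q: "is_beta_order d E \<beta> q \<alpha>" and "th_majorizes d E \<beta> p q" "th_majorizes d E \<beta> q ?p\<alpha>"
      and "i < d" for q i
  proof (rule eq_if_partial_sums_eq[OF assms(4) _ \<open>i < d\<close>])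
    fix m assume "m \<le> d"
    let ?x = "cumw E \<beta> \<alpha> m"
    have "0 \<le> ?x \<and> ?x \<le> (\<Sum>i<d. gibbs_w E \<beta> i)"
      using cumw_nonneg cumw_mono[OF \<open>m \<le> d\<close>] cumw_perm[OF assms(4)] by metis
    then have "th_curve d E \<beta> q \<alpha> ?x \<le> th_curve d E \<beta> p \<pi> ?x"
      and "th_curve d E \<beta> ?p\<alpha> \<alpha> ?x \<le> th_curve d E \<beta> q \<alpha> ?x"
      using that assms(3) order_p\<alpha> unfolding th_majorizes_def by blast+
    then show "(\<Sum>k<m. q (\<alpha> k)) = (\<Sum>k<m. ?p\<alpha> (\<alpha> k))"
      using th_curve_beta_perm_matrix_cumw[OF perm_\<pi> assms(4) \<open>m \<le> d\<close>]
      by (simp add: th_curve_cumw[OF \<open>m \<le> d\<close>])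
  qed
  ultimately show ?thesis by blast
qed

end
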